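(* Let $d\leq n$ be natural numbers and let $A\subseteq \mathbb{F}_2^n$ satisfy $|A|>2\binom{n}{\leq \lfloor d/2\rfloor}$. Then $\mathsf{int\text{-}deg}(A+A)>d$.
   Context: $\mathbb{F}_2$ is the field with two elements and $A+A=\{a+b \mid a,b\in A\}\subseteq\mathbb{F}_2^n$. For $B\subseteq\mathbb{F}_2^n$ and a function $f:B\to\mathbb{F}_2$, $\deg_B(f)$ is the minimal total degree of a multilinear polynomial $P\in\mathbb{F}_2[x_1,\dots,x_n]$ with $P(b)=f(b)$ for all $b\in B$. The interpolation degree $\mathsf{int\text{-}deg}(B)$ is the maximum of $\deg_B(f)$ over all functions $f:B\to\mathbb{F}_2$, i.e. the smallest $d$ such that every function $B\to\mathbb{F}_2$ agrees on $B$ with some polynomial of degree at most $d$. The notation $\binom{n}{\leq k}$ means $\sum_{i=0}^{k}\binom{n}{i}$. *)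

theory Defs
  imports Main "HOL-Library.Z2"
begin

text \<open>Vectors of F_2^n are represented as functions nat => bit vanishing outside {0..<n}.\<close>
definition vecs :: "nat \<Rightarrow> (nat \<Rightarrow> bit) set" where
  "vecs n = {x. \<forall>i\<ge>n. x i = 0}"

definition sumset :: "(nat \<Rightarrow> bit) set \<Rightarrow> (nat \<Rightarrow> bit) set" where
  "sumset A = {(\<lambda>i. a i + b i) | a b. a \<in> A \<and> b \<in> A}"

text \<open>A multilinear polynomial in x_0,...,x_{n-1} over F_2 is given by its coefficient
  function on monomials (subsets of {0..<n}).\<close>
definition is_mlpoly :: "nat \<Rightarrow> (nat set \<Rightarrow> bit) \<Rightarrow> bool" where
  "is_mlpoly n c \<longleftrightarrow> (\<forall>S. c S \<noteq> 0 \<longrightarrow> S \<subseteq> {0..<n})"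

definition mlpoly_deg :: "(nat set \<Rightarrow> bit) \<Rightarrow> nat" where
  "mlpoly_deg c = Max ({card S | S. c S \<noteq> 0} \<union> {0})"

definition mlpoly_eval :: "nat \<Rightarrow> (nat set \<Rightarrow> bit) \<Rightarrow> (nat \<Rightarrow> bit) \<Rightarrow> bit" where
  "mlpoly_eval n c x = (\<Sum>S\<in>Pow {0..<n}. c S * (\<Prod>i\<in>S. x i))"

definition deg_on :: "nat \<Rightarrow> (nat \<Rightarrow> bit) set \<Rightarrow> ((nat \<Rightarrow> bit) \<Rightarrow> bit) \<Rightarrow> nat" where
  "deg_on n B f = (LEAST d. \<exists>c. is_mlpoly n c \<and> mlpoly_deg c = d \<and>
                              (\<forall>b\<in>B. mlpoly_eval n c b = f b))"

definition int_deg :: "nat \<Rightarrow> (nat \<Rightarrow> bit) set \<Rightarrow> nat" where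
  "int_deg n B = Max (range (deg_on n B))"

end

theory Submission
  imports Defs "HOL-Library.FuncSet"
begin

text \<open>If a multilinear polynomial P of degree at most d interpolates the indicator of 0 on A + A,
  then P(a + b) = [a = b] for a, b \<in> A. Expanding every monomial of P(a + b) into a monomial in a
  times a monomial in b, one of the two factors has degree at most d/2. Hence the A \<times> A identity
  matrix is a sum of 2 * binom(n, \<le> d/2) products \<phi>(a) \<psi>(b), which bounds |A|; the rank
  argument is replaced by counting the subsets of A, each of which is determined by its coefficient
  vector in these products.\<close>

lemma card_le_of_delta_factorization:
  fixes \<phi> \<psi> :: "'k \<Rightarrow> 'a \<Rightarrow> 'r::comm_ring_1"
  assumes "finite (UNIV :: 'r set)" "finite A" "finite K"
    and delta: "\<And>a b. a \<in> A \<Longrightarrow> b \<in> A \<Longrightarrow>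
      (\<Sum>k\<in>K. \<phi> k a * \<psi> k b) = (if a = b then 1 else 0)"
  shows "card A \<le> card K"
proof -
  define coeffs where "coeffs x = (\<lambda>k\<in>K. \<Sum>a\<in>A. x a * \<phi> k a)" for x :: "'a \<Rightarrow> 'r"
  have recover: "x b = (\<Sum>k\<in>K. coeffs x k * \<psi> k b)" if "x \<in> A \<rightarrow>\<^sub>E UNIV" "b \<in> A" for x b
  proof -
    have "x b = (\<Sum>a\<in>A. x a * (if a = b then 1 else 0))"
      using \<open>finite A\<close> \<open>b \<in> A\<close> by (simp add: if_distrib cong: if_cong)
    also have "\<dots> = (\<Sum>a\<in>A. x a * (\<Sum>k\<in>K. \<phi> k a * \<psi> k b))"
      using delta \<open>b \<in> A\<close> by (intro sum.cong) simp_all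
    also have "\<dots> = (\<Sum>a\<in>A. \<Sum>k\<in>K. x a * \<phi> k a * \<psi> k b)"
      by (simp add: sum_distrib_left mult.assoc)
    also have "\<dots> = (\<Sum>k\<in>K. \<Sum>a\<in>A. x a * \<phi> k a * \<psi> k b)"
      by (rule sum.swap)
    also have "\<dots> = (\<Sum>k\<in>K. coeffs x k * \<psi> k b)"
      by (simp add: coeffs_def sum_distrib_right)
    finally show ?thesis .
  qed
  have "inj_on coeffs (A \<rightarrow>\<^sub>E UNIV)"
  proof (rule inj_onI)
    fix x y assume x: "x \<in> A \<rightarrow>\<^sub>E UNIV" and y: "y \<in> A \<rightarrow>\<^sub>E UNIV" and "coeffs x = coeffs y"
    then show "x = y"
      by (intro PiE_ext[OF x y]) (simp add: recover[OF x] recover[OF y])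
  qed
  moreover have "coeffs ` (A \<rightarrow>\<^sub>E UNIV) \<subseteq> K \<rightarrow>\<^sub>E UNIV"
    by (auto simp: coeffs_def)
  moreover have "finite (K \<rightarrow>\<^sub>E (UNIV :: 'r set))"
    using assms(1,3) by (simp add: finite_PiE)
  ultimately have "card (A \<rightarrow>\<^sub>E (UNIV :: 'r set)) \<le> card (K \<rightarrow>\<^sub>E (UNIV :: 'r set))"
    by (rule card_inj_on_le)
  then have "card (UNIV :: 'r set) ^ card A \<le> card (UNIV :: 'r set) ^ card K"
    using assms(2,3) by (simp add: card_PiE)
  moreover have "card {0, 1 :: 'r} \<le> card (UNIV :: 'r set)"
    using assms(1) by (rule card_mono) simp
  ultimately show ?thesis
    by (simp add: power_le_imp_le_exp)
qed

definition small_subsets :: "nat \<Rightarrow> nat \<Rightarrow> nat set set" where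
  "small_subsets n k = {U. U \<subseteq> {0..<n} \<and> card U \<le> k}"

lemma finite_small_subsets: "finite (small_subsets n k)"
  unfolding small_subsets_def by (rule finite_subset[of _ "Pow {0..<n}"]) auto

lemma card_small_subsets: "card (small_subsets n k) = (\<Sum>i\<le>k. n choose i)"
proof -
  have "small_subsets n k = (\<Union>i\<le>k. {U. U \<subseteq> {0..<n} \<and> card U = i})"
    unfolding small_subsets_def by auto
  also have "card \<dots> = (\<Sum>i\<le>k. card {U. U \<subseteq> {0..<n} \<and> card U = i})"
    by (rule card_UN_disjoint) (auto intro: finite_subset[of _ "Pow {0..<n}"])
  also have "\<dots> = (\<Sum>i\<le>k. n choose i)"
    by (simp add: n_subsets)
  finally show ?thesis .
qed

lemma multilinear_at_sum_factorization:
  fixes c :: "nat set \<Rightarrow> 'r::comm_ring_1"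
  assumes deg: "\<And>S. S \<subseteq> {0..<n} \<Longrightarrow> c S \<noteq> 0 \<Longrightarrow> card S \<le> d"
  obtains \<phi> \<psi> :: "nat set + nat set \<Rightarrow> (nat \<Rightarrow> 'r) \<Rightarrow> 'r" where
    "\<And>a b. (\<Sum>S\<in>Pow {0..<n}. c S * (\<Prod>i\<in>S. a i + b i)) =
      (\<Sum>k\<in>small_subsets n (d div 2) <+> small_subsets n (d div 2). \<phi> k a * \<psi> k b)"
proof -
  let ?I = "small_subsets n (d div 2)"
  define J where "J = {(S, T). S \<subseteq> {0..<n} \<and> T \<subseteq> S \<and> c S \<noteq> 0}"
  \<comment> \<open>The term for (S, T) is filed under its a-part T if that is small, and otherwise under its
    b-part S - T, which is then small because card S \<le> d.\<close>
  define key :: "nat set \<times> nat set \<Rightarrow> nat set + nat set" where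
    "key = (\<lambda>(S, T). if card T \<le> d div 2 then Inl T else Inr (S - T))"
  define \<phi> :: "nat set + nat set \<Rightarrow> (nat \<Rightarrow> 'r) \<Rightarrow> 'r" where
    "\<phi> = case_sum (\<lambda>U a. \<Prod>i\<in>U. a i)
                   (\<lambda>W a. \<Sum>(S, T)\<in>{j\<in>J. key j = Inr W}. c S * (\<Prod>i\<in>T. a i))"
  define \<psi> :: "nat set + nat set \<Rightarrow> (nat \<Rightarrow> 'r) \<Rightarrow> 'r" where
    "\<psi> = case_sum (\<lambda>U b. \<Sum>(S, T)\<in>{j\<in>J. key j = Inl U}. c S * (\<Prod>i\<in>S - T. b i))
                   (\<lambda>W b. \<Prod>i\<in>W. b i)"
  have finite_pairs: "finite (Sigma (Pow {0..<n}) Pow)"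
    by (rule finite_SigmaI) (auto intro: finite_subset)
  have finite_J: "finite J"
    by (rule finite_subset[OF _ finite_pairs]) (auto simp: J_def)
  have key_J: "key ` J \<subseteq> ?I <+> ?I"
  proof safe
    fix S T assume "(S, T) \<in> J"
    then have "S \<subseteq> {0..<n}" "T \<subseteq> S" "card S \<le> d"
      using deg by (auto simp: J_def)
    moreover have "card (S - T) = card S - card T"
      using \<open>S \<subseteq> {0..<n}\<close> \<open>T \<subseteq> S\<close> by (meson card_Diff_subset finite_atLeastLessThan finite_subset)
    ultimately show "key (S, T) \<in> ?I <+> ?I"
      by (auto simp: key_def small_subsets_def)
  qed
  have "(\<Sum>S\<in>Pow {0..<n}. c S * (\<Prod>i\<in>S. a i + b i)) = (\<Sum>k\<in>?I <+> ?I. \<phi> k a * \<psi> k b)" for a b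
  proof -
    define t where "t = (\<lambda>S T. c S * ((\<Prod>i\<in>T. a i) * (\<Prod>i\<in>S - T. b i)))"
    have "(\<Sum>S\<in>Pow {0..<n}. c S * (\<Prod>i\<in>S. a i + b i)) = (\<Sum>S\<in>Pow {0..<n}. \<Sum>T\<in>Pow S. t S T)"
    proof (rule sum.cong[OF refl])
      fix S assume "S \<in> Pow {0..<n}"
      then have "finite S" by (auto intro: finite_subset)
      then show "c S * (\<Prod>i\<in>S. a i + b i) = (\<Sum>T\<in>Pow S. t S T)"
        by (simp add: t_def prod_add sum_distrib_left)
    qed
    also have "\<dots> = sum (case_prod t) (Sigma (Pow {0..<n}) Pow)"
      by (rule sum.Sigma) (auto intro: finite_subset)
    also have "\<dots> = sum (case_prod t) J"
      using finite_pairs by (intro sum.mono_neutral_right) (auto simp: J_def t_def)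
    also have "\<dots> = (\<Sum>k\<in>?I <+> ?I. sum (case_prod t) {j\<in>J. key j = k})"
      using finite_small_subsets by (intro sum.group[OF finite_J _ key_J, symmetric]) simp
    also have "\<dots> = (\<Sum>k\<in>?I <+> ?I. \<phi> k a * \<psi> k b)"
    proof (intro sum.cong refl)
      fix k show "sum (case_prod t) {j\<in>J. key j = k} = \<phi> k a * \<psi> k b"
      proof (cases k)
        case (Inl U)
        have "sum (case_prod t) {j\<in>J. key j = k} = (\<Sum>(S, T)\<in>{j\<in>J. key j = k}. (\<Prod>i\<in>U. a i) * (c S * (\<Prod>i\<in>S - T. b i)))"
          by (intro sum.cong) (auto simp: t_def key_def Inl split: if_splits)
        then show ?thesis
          by (simp add: Inl \<phi>_def \<psi>_def sum_distrib_left case_prod_beta)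
      next
        case (Inr W)
        have "sum (case_prod t) {j\<in>J. key j = k} = (\<Sum>(S, T)\<in>{j\<in>J. key j = k}. c S * (\<Prod>i\<in>T. a i) * (\<Prod>i\<in>W. b i))"
          by (intro sum.cong) (auto simp: t_def key_def Inr mult.assoc split: if_splits)
        then show ?thesis
          by (simp add: Inr \<phi>_def \<psi>_def sum_distrib_right case_prod_beta)
      qed
    qed
    finally show ?thesis .
  qed
  then show thesis by (rule that)
qed

definition indicator_zero :: "(nat \<Rightarrow> bit) \<Rightarrow> bit" where
  "indicator_zero x = (if x = (\<lambda>i. 0) then 1 else 0)"

lemma UNIV_bit: "(UNIV :: bit set) = {0, 1}"
  by (auto intro: bit.exhaust)

lemma sumset_eq_image: "sumset A = (\<lambda>(a, b) i. a i + b i) ` (A \<times> A)"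
  unfolding sumset_def by auto

lemma finite_sumset: "finite A \<Longrightarrow> finite (sumset A)"
  by (simp add: sumset_eq_image)

lemma sumset_subset_vecs: "A \<subseteq> vecs n \<Longrightarrow> sumset A \<subseteq> vecs n"
  by (auto simp: sumset_def vecs_def subset_iff)

lemma bit_vec_add_eq_0_iff: "(\<lambda>i. a i + b i) = (\<lambda>i. 0 :: bit) \<longleftrightarrow> a = b"
proof -
  have "x + y = 0 \<longleftrightarrow> x = y" for x y :: bit
    by (cases x; cases y) simp_all
  then show ?thesis
    by (simp only: fun_eq_iff)
qed

lemma prod_add_one_bit:
  fixes x :: "nat \<Rightarrow> bit"
  shows "(\<Prod>i\<in>{0..<n}. x i + 1) = (if \<forall>i<n. x i = 0 then 1 else 0)"
  by (induction n) (auto simp: less_Suc_eq)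

lemma mlpoly_eval_indicator_zero:
  assumes "x \<in> vecs n"
  shows "mlpoly_eval n (\<lambda>S. if S \<subseteq> {0..<n} then 1 else 0) x = indicator_zero x"
proof -
  have "mlpoly_eval n (\<lambda>S. if S \<subseteq> {0..<n} then 1 else 0) x = (\<Sum>S\<in>Pow {0..<n}. \<Prod>i\<in>S. x i)"
    unfolding mlpoly_eval_def by (intro sum.cong) auto
  also have "\<dots> = (\<Prod>i\<in>{0..<n}. x i + 1)"
    by (simp only: prod_add[OF finite_atLeastLessThan] prod.neutral_const mult_1_right)
  also have "\<dots> = indicator_zero x"
    using assms by (auto simp only: indicator_zero_def prod_add_one_bit vecs_def mem_Collect_eq fun_eq_iff) (meson not_le)
  finally show ?thesis .
qed

lemma card_le_mlpoly_deg:
  assumes "is_mlpoly n c" "c S \<noteq> 0"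
  shows "card S \<le> mlpoly_deg c"
proof -
  have "{card S | S. c S \<noteq> 0} \<subseteq> card ` Pow {0..<n}"
    using assms(1) by (auto simp: is_mlpoly_def)
  then have "finite {card S | S. c S \<noteq> 0}"
    by (rule finite_subset) simp
  then show ?thesis
    unfolding mlpoly_deg_def using assms(2) by (intro Max_ge) auto
qed

lemma less_deg_on:
  assumes "is_mlpoly n c\<^sub>0" "\<forall>b\<in>B. mlpoly_eval n c\<^sub>0 b = f b"
    and "\<And>c. is_mlpoly n c \<Longrightarrow> mlpoly_deg c \<le> d \<Longrightarrow> \<exists>b\<in>B. mlpoly_eval n c b \<noteq> f b"
  shows "d < deg_on n B f"
proof -
  obtain c where "is_mlpoly n c" "mlpoly_deg c = deg_on n B f" "\<forall>b\<in>B. mlpoly_eval n c b = f b"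
    using LeastI[of "\<lambda>d. \<exists>c. is_mlpoly n c \<and> mlpoly_deg c = d \<and> (\<forall>b\<in>B. mlpoly_eval n c b = f b)"]
      assms(1,2) unfolding deg_on_def by blast
  with assms(3) show ?thesis by force
qed

lemma deg_on_le_int_deg:
  assumes "finite B"
  shows "deg_on n B f \<le> int_deg n B"
proof -
  have "deg_on n B g = deg_on n B (restrict g B)" for g
    unfolding deg_on_def by (intro arg_cong[where f = Least] ext) (metis restrict_apply')
  then have "range (deg_on n B) = deg_on n B ` (B \<rightarrow>\<^sub>E UNIV)"
    by (auto simp: image_iff intro!: bexI[of _ "restrict _ B"])
  moreover have "finite (B \<rightarrow>\<^sub>E (UNIV :: bit set))"
    using assms by (intro finite_PiE) (auto simp: UNIV_bit)
  ultimately show ?thesis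
    unfolding int_deg_def by (intro Max_ge) auto
qed

lemma card_le_of_mlpoly_delta_on_sums:
  assumes "finite A" "is_mlpoly n c" "mlpoly_deg c \<le> d"
    and delta: "\<And>a b. a \<in> A \<Longrightarrow> b \<in> A \<Longrightarrow>
      mlpoly_eval n c (\<lambda>i. a i + b i) = (if a = b then 1 else 0)"
  shows "card A \<le> 2 * (\<Sum>i\<le>d div 2. n choose i)"
proof -
  let ?I = "small_subsets n (d div 2)"
  have "card S \<le> d" if "c S \<noteq> 0" for S
    using card_le_mlpoly_deg[OF assms(2) that] assms(3) by simp
  then obtain \<phi> \<psi> :: "nat set + nat set \<Rightarrow> (nat \<Rightarrow> bit) \<Rightarrow> bit" where
    "\<And>a b. mlpoly_eval n c (\<lambda>i. a i + b i) = (\<Sum>k\<in>?I <+> ?I. \<phi> k a * \<psi> k b)"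
    unfolding mlpoly_eval_def using multilinear_at_sum_factorization[of n c d] by blast
  with delta have "card A \<le> card (?I <+> ?I)"
    by (intro card_le_of_delta_factorization[where \<phi> = \<phi> and \<psi> = \<psi>])
      (auto simp: UNIV_bit assms(1) finite_small_subsets)
  then show ?thesis
    by (simp add: card_Plus finite_small_subsets card_small_subsets)
qed

lemma less_deg_on_indicator_zero_sumset:
  assumes "finite A" "A \<subseteq> vecs n" "card A > 2 * (\<Sum>i\<le>d div 2. n choose i)"
  shows "d < deg_on n (sumset A) indicator_zero"
proof (rule less_deg_on)
  show "is_mlpoly n (\<lambda>S. if S \<subseteq> {0..<n} then 1 else 0)"
    by (simp add: is_mlpoly_def)
  show "\<forall>x\<in>sumset A. mlpoly_eval n (\<lambda>S. if S \<subseteq> {0..<n} then 1 else 0) x = indicator_zero x"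
    using sumset_subset_vecs[OF assms(2)] mlpoly_eval_indicator_zero by blast
next
  fix c assume c: "is_mlpoly n c" "mlpoly_deg c \<le> d"
  show "\<exists>x\<in>sumset A. mlpoly_eval n c x \<noteq> indicator_zero x"
  proof (rule ccontr)
    assume interpolates: "\<not> ?thesis"
    have "mlpoly_eval n c (\<lambda>i. a i + b i) = (if a = b then 1 else 0)" if "a \<in> A" "b \<in> A" for a b
    proof -
      have "(\<lambda>i. a i + b i) \<in> sumset A"
        using that by (auto simp: sumset_def)
      with interpolates have "mlpoly_eval n c (\<lambda>i. a i + b i) = indicator_zero (\<lambda>i. a i + b i)"
        by blast
      then show ?thesis
        by (simp only: indicator_zero_def bit_vec_add_eq_0_iff)
    qed
    with assms(1) c have "card A \<le> 2 * (\<Sum>i\<le>d div 2. n choose i)"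
      by (intro card_le_of_mlpoly_delta_on_sums)
    with assms(3) show False by simp
  qed
qed

theorem theorem1p6:
  fixes n d :: nat and A :: "(nat \<Rightarrow> bit) set"
  assumes "d \<le> n"
    and "A \<subseteq> vecs n"
    and "card A > 2 * (\<Sum>i\<le>d div 2. n choose i)"
  shows "int_deg n (sumset A) > d"
proof -
  have "finite A"
    using assms(3) by (metis card.infinite not_less_zero)
  then have "d < deg_on n (sumset A) indicator_zero"
    using assms(2,3) by (rule less_deg_on_indicator_zero_sumset)
  also have "\<dots> \<le> int_deg n (sumset A)"
    using \<open>finite A\<close> by (intro deg_on_le_int_deg finite_sumset)
  finally show ?thesis .
qed

end
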